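(* The greedy algorithm, applied to the declared types, is a truthful mechanism without money and with verification for CAs with unknown $k$-minded bidders (single supply).
   Context: Combinatorial auction with a set $\mathsf U$ of $m$ goods, each in a single copy, and $n$ bidders. True type of bidder $i$: $t_i=(v_i,\mathcal S_i)$ with $\mathcal S_i$ a private collection of $k$ nonempty subsets of $\mathsf U$ and $v_i:\mathcal S_i\to\mathbb R_{\ge0}$ private, extended by $v_i(T)=\max\{v_i(S'):S'\in\mathcal S_i,S'\subseteq T\}$ ($0$ if none). Declarations $(w,\mathcal W)$ have the same form. Greedy algorithm on declarations $(w_i,\mathcal W_i)$: list all elementary bids $(i,S,w_i(S))$ with $S\in\mathcal W_i$, $w_i(S)>0$ in non-increasing order of value, ties broken in favour of smaller bidder index; scan the list and accept $(i,S,w_i(S))$ (allocate $S$ to $i$) iff $i$ has not yet been allocated a set and $S$ is disjoint from all previously accepted sets. Verification: bidder $i$ with true type $t_i$ facing $\mathbf b_{-i}$ may declare $b_i=(z,\mathcal T)$ only if $z(A_i(b_i,\mathbf b_{-i}))\le v_i(A_i(b_i,\mathbf b_{-i}))$. Truthful without money and with verification: for all $i$, $\mathbf b_{-i}$, true types $t_i$ and declarations $b_i$ permitted by verification, $v_i(A_i(t_i,\mathbf b_{-i}))\ge v_i(A_i(b_i,\mathbf b_{-i}))$. *)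

theory Defs
  imports Complex_Main "HOL-Library.Product_Lexorder"
begin

text \<open>A type / declaration of a bidder is a pair (valuation, collection of sets).
  Bidders are indexed by 0..<n; a profile is a function from bidder indices to declarations.\<close>

type_synonym 'g decl = "('g set \<Rightarrow> real) \<times> 'g set set"

definition valid_decl :: "'g set \<Rightarrow> nat \<Rightarrow> 'g decl \<Rightarrow> bool" where
  "valid_decl U k d \<longleftrightarrow>
     snd d \<subseteq> Pow U \<and> card (snd d) = k \<and> {} \<notin> snd d \<and> (\<forall>S\<in>snd d. fst d S \<ge> 0)"

definition ext_val :: "'g decl \<Rightarrow> 'g set \<Rightarrow> real" where
  "ext_val d T = (if \<exists>S'\<in>snd d. S' \<subseteq> T
                  then Max {fst d S' | S'. S' \<in> snd d \<and> S' \<subseteq> T} else 0)"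

definition bids :: "nat \<Rightarrow> (nat \<Rightarrow> 'g decl) \<Rightarrow> (nat \<times> 'g set) set" where
  "bids n b = {(i, S). i < n \<and> S \<in> snd (b i) \<and> fst (b i) S > 0}"

text \<open>Sorting key: non-increasing value, then smaller bidder index; ties among the
  same bidder's own sets (left unspecified by the paper) are broken by an arbitrary
  injective rank rk on bundles.\<close>
definition bid_key :: "('g set \<Rightarrow> nat) \<Rightarrow> (nat \<Rightarrow> 'g decl) \<Rightarrow> nat \<times> 'g set \<Rightarrow> real \<times> nat \<times> nat" where
  "bid_key rk b p = (- fst (b (fst p)) (snd p), fst p, rk (snd p))"

definition sorted_bids :: "('g set \<Rightarrow> nat) \<Rightarrow> nat \<Rightarrow> (nat \<Rightarrow> 'g decl) \<Rightarrow> (nat \<times> 'g set) list" where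
  "sorted_bids rk n b =
     map (the_inv_into (bids n b) (bid_key rk b))
         (sorted_list_of_set (bid_key rk b ` bids n b))"

fun greedy_scan :: "(nat \<times> 'g set) list \<Rightarrow> (nat \<Rightarrow> 'g set option) \<Rightarrow> (nat \<Rightarrow> 'g set option)" where
  "greedy_scan [] a = a"
| "greedy_scan ((i, S) # bs) a =
     greedy_scan bs (if a i = None \<and> (\<forall>j T. a j = Some T \<longrightarrow> S \<inter> T = {})
                     then a(i := Some S) else a)"

definition greedy_alloc :: "('g set \<Rightarrow> nat) \<Rightarrow> nat \<Rightarrow> (nat \<Rightarrow> 'g decl) \<Rightarrow> nat \<Rightarrow> 'g set" where
  "greedy_alloc rk n b i =
     (case greedy_scan (sorted_bids rk n b) (\<lambda>_. None) i of None \<Rightarrow> {} | Some S \<Rightarrow> S)"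

end

theory Submission
  imports Defs
begin

text \<open>If the false declaration wins the bundle S, it bid a positive value on S, and verification
  makes the true value of S at least that bid; hence some true set S' \<subseteq> S has t(S') \<ge> d(S).
  As long as bidder i holds nothing, its own bids are all rejected, so the sets handed out ahead
  of one of its bids are those the greedy scan allocates among the other bidders' bids of smaller
  key. These bids do not depend on i's declaration, and every other bid ahead of (i, S') under
  the truth is also ahead of (i, S) under the lie. So everything allocated ahead of (i, S') is
  disjoint from S \<supseteq> S', and i either already holds a set of true value at least t(S') or
  receives S'.\<close>

lemma greedy_scan_append: "greedy_scan (xs @ ys) a = greedy_scan ys (greedy_scan xs a)"
  by (induction xs arbitrary: a) auto

lemma greedy_scan_keeps: "a j = Some T \<Longrightarrow> greedy_scan xs a j = Some T"
proof (induction xs a rule: greedy_scan.induct)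
  case (2 i S bs a)
  then show ?case
    by (simp only: greedy_scan.simps) (rule "2.IH", auto)
qed simp

lemma greedy_scan_SomeD: "greedy_scan xs a j = Some T \<Longrightarrow> a j = Some T \<or> (j, T) \<in> set xs"
  by (induction xs a rule: greedy_scan.induct) (auto split: if_splits)

lemma greedy_scan_accepts:
  assumes "greedy_scan pre a j = None"
    and "\<forall>j' T'. greedy_scan pre a j' = Some T' \<longrightarrow> T \<inter> T' = {}"
  shows "greedy_scan (pre @ (j, T) # post) a j = Some T"
  using assms by (simp add: greedy_scan_append greedy_scan_keeps)

lemma greedy_scan_acceptedE:
  assumes "greedy_scan xs a j = Some T" and "a j = None"
  obtains pre post where "xs = pre @ (j, T) # post" and "greedy_scan pre a j = None"
    and "\<forall>j' T'. greedy_scan pre a j' = Some T' \<longrightarrow> T \<inter> T' = {}"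
  using assms
proof (induction xs a rule: greedy_scan.induct)
  case (1 a)
  then show ?case by simp
next
  case (2 i S bs a)
  define a' where "a' = (if a i = None \<and> (\<forall>j T. a j = Some T \<longrightarrow> S \<inter> T = {})
                          then a(i := Some S) else a)"
  have scan: "greedy_scan bs a' j = Some T"
    using "2.prems"(2) by (simp add: a'_def)
  show ?case
  proof (cases "a' j = None")
    case True
    show ?thesis
      by (rule "2.IH"[folded a'_def, OF _ scan True])
        (rule "2.prems"(1)[of "(i, S) # pre" for pre], auto simp: a'_def)
  next
    case False
    then have "i = j" "a' j = Some S" "\<forall>j T. a j = Some T \<longrightarrow> S \<inter> T = {}"
      using "2.prems"(3) by (auto simp: a'_def split: if_splits)
    moreover have "S = T"
      using greedy_scan_keeps[of a' j S bs] scan \<open>a' j = Some S\<close> by simp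
    ultimately show ?thesis
      using "2.prems"(1)[of "[]" bs] "2.prems"(3) by auto
  qed
qed

lemma greedy_scan_filter_unallocated:
  "greedy_scan xs a i = None \<Longrightarrow> greedy_scan xs a = greedy_scan (filter (\<lambda>q. fst q \<noteq> i) xs) a"
proof (induction xs a rule: greedy_scan.induct)
  case (1 a)
  then show ?case by simp
next
  case (2 j S bs a)
  show ?case
  proof (cases "j = i")
    case True
    have "(if a j = None \<and> (\<forall>j T. a j = Some T \<longrightarrow> S \<inter> T = {}) then a(j := Some S) else a) = a"
      using "2.prems" True greedy_scan_keeps[of "a(i := Some S)" i S bs] by force
    then show ?thesis
      using 2 True by (simp only: greedy_scan.simps) simp
  qed (use 2 in simp)
qed

lemma sorted_wrt_key_unique:
  fixes K :: "'a \<Rightarrow> 'k::linorder"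
  assumes "sorted_wrt (\<lambda>p q. K p < K q) xs" and "sorted_wrt (\<lambda>p q. K p < K q) ys"
    and "set xs = set ys"
  shows "xs = ys"
proof -
  have "sorted (map K zs) \<and> distinct (map K zs)" if "sorted_wrt (\<lambda>p q. K p < K q) zs" for zs
    using that strict_sorted_iff[of "map K zs"] by (simp add: sorted_wrt_map)
  then show ?thesis
    using assms by (intro map_sorted_distinct_set_unique[of K]) (auto simp: distinct_map)
qed

lemma takeWhile_key_less_filter:
  fixes K :: "'a \<Rightarrow> 'k::linorder"
  assumes "sorted_wrt (\<lambda>p q. K p < K q) (pre @ x # post)"
  shows "takeWhile (\<lambda>q. K q < K x) (filter P (pre @ x # post)) = filter P pre"
proof -
  have "\<forall>q\<in>set pre. K q < K x" and "\<forall>q\<in>set (x # post). \<not> K q < K x"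
    using assms by (auto simp: sorted_wrt_append)
  then have "takeWhile (\<lambda>q. K q < K x) (filter P (x # post)) = []"
    by (metis filter_is_subset hd_in_set subsetD takeWhile_eq_Nil_iff)
  then show ?thesis
    using \<open>\<forall>q\<in>set pre. K q < K x\<close> by (simp add: takeWhile_append del: filter.simps)
qed

lemma greedy_scan_before_mono:
  fixes K1 K2 :: "nat \<times> 'g set \<Rightarrow> 'k::linorder"
  assumes sorted1: "sorted_wrt (\<lambda>p q. K1 p < K1 q) (pre1 @ x1 # post1)"
    and sorted2: "sorted_wrt (\<lambda>p q. K2 p < K2 q) (pre2 @ x2 # post2)"
    and others: "filter (\<lambda>q. fst q \<noteq> i) (pre2 @ x2 # post2) = filter (\<lambda>q. fst q \<noteq> i) (pre1 @ x1 # post1)"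
    and keys: "\<And>q. fst q \<noteq> i \<Longrightarrow> K2 q < K2 x2 \<Longrightarrow> K1 q < K1 x1"
    and unalloc1: "greedy_scan pre1 a i = None" and unalloc2: "greedy_scan pre2 a i = None"
    and "greedy_scan pre2 a j = Some T"
  shows "greedy_scan pre1 a j = Some T"
proof -
  define os where "os = filter (\<lambda>q. fst q \<noteq> i) (pre1 @ x1 # post1)"
  define before1 where "before1 = takeWhile (\<lambda>q. K1 q < K1 x1) os"
  define before2 where "before2 = takeWhile (\<lambda>q. K2 q < K2 x2) os"
  have scan1: "greedy_scan pre1 a = greedy_scan before1 a"
    unfolding before1_def os_def takeWhile_key_less_filter[OF sorted1]
    by (rule greedy_scan_filter_unallocated[OF unalloc1])
  have scan2: "greedy_scan pre2 a = greedy_scan before2 a"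
    unfolding before2_def os_def others[symmetric] takeWhile_key_less_filter[OF sorted2]
    by (rule greedy_scan_filter_unallocated[OF unalloc2])
  have "\<forall>q\<in>set os. fst q \<noteq> i"
    unfolding os_def set_filter by blast
  then have "takeWhile (\<lambda>q. K2 q < K2 x2) before1 = before2"
    unfolding before1_def before2_def takeWhile_takeWhile
    by (intro takeWhile_cong) (use keys in blast)+
  then have "before1 = before2 @ dropWhile (\<lambda>q. K2 q < K2 x2) before1"
    by (metis takeWhile_dropWhile_id)
  then show ?thesis
    using assms(7) scan1 scan2 greedy_scan_keeps by (metis greedy_scan_append)
qed

lemma bids_subset: "\<forall>j<n. snd (b j) \<subseteq> Pow U \<Longrightarrow> bids n b \<subseteq> {..<n} \<times> Pow U"
  unfolding bids_def by auto

lemma inj_on_bid_key: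
  assumes "inj_on rk (Pow U)" and "\<forall>j<n. snd (b j) \<subseteq> Pow U"
  shows "inj_on (bid_key rk b) (bids n b)"
proof (rule inj_onI, clarify)
  fix j P j' Q
  assume "(j, P) \<in> bids n b" "(j', Q) \<in> bids n b" "bid_key rk b (j, P) = bid_key rk b (j', Q)"
  then have "j = j'" "rk P = rk Q" "P \<in> Pow U" "Q \<in> Pow U"
    using bids_subset[OF assms(2)] by (auto simp: bid_key_def)
  then show "j = j' \<and> P = Q"
    using inj_onD[OF assms(1)] by blast
qed

lemma
  assumes "finite U" and "inj_on rk (Pow U)" and "\<forall>j<n. snd (b j) \<subseteq> Pow U"
  shows set_sorted_bids: "set (sorted_bids rk n b) = bids n b"
    and sorted_wrt_sorted_bids: "sorted_wrt (\<lambda>p q. bid_key rk b p < bid_key rk b q) (sorted_bids rk n b)"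
proof -
  have fin: "finite (bids n b)"
    using bids_subset[OF assms(3)] assms(1) by (auto intro: finite_subset)
  note inj = inj_on_bid_key[OF assms(2,3)]
  show "set (sorted_bids rk n b) = bids n b"
    unfolding sorted_bids_def using fin inj by simp
  have "map (bid_key rk b) (sorted_bids rk n b) = sorted_list_of_set (bid_key rk b ` bids n b)"
    unfolding sorted_bids_def map_map
    by (rule map_idI) (use fin inj in \<open>auto intro: f_the_inv_into_f\<close>)
  then have "sorted_wrt (<) (map (bid_key rk b) (sorted_bids rk n b))"
    using fin by simp
  then show "sorted_wrt (\<lambda>p q. bid_key rk b p < bid_key rk b q) (sorted_bids rk n b)"
    by (simp add: sorted_wrt_map)
qed

lemma filter_sorted_bids_others:
  assumes "finite U" and "inj_on rk (Pow U)"
    and "\<forall>j<n. snd (b j) \<subseteq> Pow U" and "\<forall>j<n. snd (b' j) \<subseteq> Pow U"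
    and agree: "\<forall>j. j \<noteq> i \<longrightarrow> b' j = b j"
  shows "filter (\<lambda>q. fst q \<noteq> i) (sorted_bids rk n b') = filter (\<lambda>q. fst q \<noteq> i) (sorted_bids rk n b)"
proof (rule sorted_wrt_key_unique[where K = "bid_key rk b"])
  have keys: "bid_key rk b' q = bid_key rk b q" if "fst q \<noteq> i" for q
    using agree that by (simp add: bid_key_def)
  show "sorted_wrt (\<lambda>p q. bid_key rk b p < bid_key rk b q) (filter (\<lambda>q. fst q \<noteq> i) (sorted_bids rk n b'))"
    using sorted_wrt_filter[OF sorted_wrt_sorted_bids[OF assms(1,2,4)]]
    by (rule sorted_wrt_mono_rel[rotated]) (simp add: keys)
  show "sorted_wrt (\<lambda>p q. bid_key rk b p < bid_key rk b q) (filter (\<lambda>q. fst q \<noteq> i) (sorted_bids rk n b))"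
    using sorted_wrt_filter[OF sorted_wrt_sorted_bids[OF assms(1-3)]] .
  show "set (filter (\<lambda>q. fst q \<noteq> i) (sorted_bids rk n b')) = set (filter (\<lambda>q. fst q \<noteq> i) (sorted_bids rk n b))"
    using agree by (auto simp: set_sorted_bids[OF assms(1,2,3)] set_sorted_bids[OF assms(1,2,4)] bids_def)
qed

lemma ext_val_ge: "finite (snd d) \<Longrightarrow> S \<in> snd d \<Longrightarrow> S \<subseteq> T \<Longrightarrow> fst d S \<le> ext_val d T"
  unfolding ext_val_def by (auto intro: Max_ge)

lemma ext_val_nonneg:
  assumes "finite (snd d)" and "\<forall>S\<in>snd d. 0 \<le> fst d S"
  shows "0 \<le> ext_val d T"
proof (cases "\<exists>S\<in>snd d. S \<subseteq> T")
  case True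
  then obtain S where "S \<in> snd d" "S \<subseteq> T" by blast
  then show ?thesis
    using assms ext_val_ge[of d S T] by fastforce
qed (simp add: ext_val_def)

lemma ext_val_attained:
  assumes "finite (snd d)" and "ext_val d T \<noteq> 0"
  obtains S where "S \<in> snd d" and "S \<subseteq> T" and "ext_val d T = fst d S"
proof -
  have "\<exists>S\<in>snd d. S \<subseteq> T"
    using assms(2) by (auto simp: ext_val_def split: if_splits)
  then have "Max {fst d S | S. S \<in> snd d \<and> S \<subseteq> T} \<in> {fst d S | S. S \<in> snd d \<and> S \<subseteq> T}"
    using assms(1) by (intro Max_in) auto
  then show ?thesis
    using that \<open>\<exists>S\<in>snd d. S \<subseteq> T\<close> by (auto simp: ext_val_def)
qed

lemma greedy_allocated_bid:
  assumes "finite U" and "inj_on rk (Pow U)" and "\<forall>j<n. snd (b j) \<subseteq> Pow U"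
    and "greedy_scan (sorted_bids rk n b) Map.empty i = Some S"
  shows "(i, S) \<in> bids n b"
  using greedy_scan_SomeD[OF assms(4)] set_sorted_bids[OF assms(1-3)] by simp

lemma greedy_truthful_allocation_no_worse:
  assumes fin: "finite U" and inj: "inj_on rk (Pow U)" and "i < n"
    and "\<forall>j<n. snd (b j) \<subseteq> Pow U" and "snd d \<subseteq> Pow U" and "snd t \<subseteq> Pow U"
    and lie: "greedy_scan (sorted_bids rk n (b(i := d))) Map.empty i = Some S"
    and S': "S' \<in> snd t" "S' \<subseteq> S" and true_value: "fst d S \<le> fst t S'"
  shows "\<exists>T\<in>snd t. greedy_scan (sorted_bids rk n (b(i := t))) Map.empty i = Some T \<and> fst t S' \<le> fst t T"
proof -
  define K1 where "K1 = bid_key rk (b(i := d))"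
  define K2 where "K2 = bid_key rk (b(i := t))"
  have within1: "\<forall>j<n. snd ((b(i := d)) j) \<subseteq> Pow U" and within2: "\<forall>j<n. snd ((b(i := t)) j) \<subseteq> Pow U"
    using assms by auto
  note set2 = set_sorted_bids[where b = "b(i := t)", OF fin inj within2]
  note sorted1 = sorted_wrt_sorted_bids[where b = "b(i := d)", OF fin inj within1, folded K1_def]
  note sorted2 = sorted_wrt_sorted_bids[where b = "b(i := t)", OF fin inj within2, folded K2_def]
  obtain pre post where L1: "sorted_bids rk n (b(i := d)) = pre @ (i, S) # post"
    and unalloc: "greedy_scan pre Map.empty i = None"
    and disjoint: "\<forall>j T. greedy_scan pre Map.empty j = Some T \<longrightarrow> S \<inter> T = {}"
    using greedy_scan_acceptedE[OF lie] by auto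
  have "(i, S) \<in> bids n (b(i := d))"
    by (rule greedy_allocated_bid[OF fin inj within1 lie])
  then have "(i, S') \<in> bids n (b(i := t))"
    using assms by (auto simp: bids_def)
  then obtain pre' post' where L2: "sorted_bids rk n (b(i := t)) = pre' @ (i, S') # post'"
    using set2 by (metis split_list)
  show ?thesis
  proof (cases "greedy_scan pre' Map.empty i")
    case (Some T)
    then have "(i, T) \<in> set pre'"
      using greedy_scan_SomeD by fastforce
    then have "(i, T) \<in> bids n (b(i := t))" and "K2 (i, T) < K2 (i, S')"
      using set2 sorted2 L2 by (auto simp: sorted_wrt_append)
    then have "T \<in> snd t" and "K2 (i, T) < K2 (i, S')"
      by (simp_all add: bids_def)
    then have "fst t S' \<le> fst t T"
      by (auto simp: K2_def bid_key_def less_prod_def)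
    moreover have "greedy_scan (sorted_bids rk n (b(i := t))) Map.empty i = Some T"
      using Some by (simp add: L2 greedy_scan_append greedy_scan_keeps)
    ultimately show ?thesis
      using \<open>T \<in> snd t\<close> by blast
  next
    case None
    have others: "filter (\<lambda>q. fst q \<noteq> i) (pre' @ (i, S') # post') = filter (\<lambda>q. fst q \<noteq> i) (pre @ (i, S) # post)"
      using filter_sorted_bids_others[where b = "b(i := d)" and b' = "b(i := t)" and i = i, OF fin inj within1 within2]
      by (simp add: L1 L2 del: filter.simps)
    have keys: "K1 q < K1 (i, S)" if "fst q \<noteq> i" and "K2 q < K2 (i, S')" for q
      using that true_value by (auto simp: K1_def K2_def bid_key_def less_prod_def)
    have "S' \<inter> T = {}" if "greedy_scan pre' Map.empty j = Some T" for j T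
      using greedy_scan_before_mono[OF sorted1[unfolded L1] sorted2[unfolded L2] others keys unalloc None that]
        disjoint S'(2) by blast
    then have "greedy_scan (sorted_bids rk n (b(i := t))) Map.empty i = Some S'"
      unfolding L2 using None by (blast intro: greedy_scan_accepts)
    then show ?thesis
      using S'(1) by blast
  qed
qed

theorem theorem8:
  fixes U :: "'g set" and n k :: nat and rk :: "'g set \<Rightarrow> nat"
    and b :: "nat \<Rightarrow> 'g decl" and t bi :: "'g decl" and i :: nat
  assumes "finite U"
    and "inj_on rk (Pow U)"
    and "i < n"
    and "\<forall>j<n. valid_decl U k (b j)"
    and "valid_decl U k t"
    and "valid_decl U k bi"
    and "ext_val bi (greedy_alloc rk n (b(i := bi)) i)
           \<le> ext_val t (greedy_alloc rk n (b(i := bi)) i)"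
  shows "ext_val t (greedy_alloc rk n (b(i := t)) i)
           \<ge> ext_val t (greedy_alloc rk n (b(i := bi)) i)"
proof -
  have within: "\<forall>j<n. snd (b j) \<subseteq> Pow U" "snd t \<subseteq> Pow U" "snd bi \<subseteq> Pow U"
    and fin: "finite (snd t)" "finite (snd bi)"
    using assms(1,4-6) by (auto simp: valid_decl_def intro: finite_subset)
  have within_lie: "\<forall>j<n. snd ((b(i := bi)) j) \<subseteq> Pow U"
    using within by simp
  have t_nonneg: "0 \<le> ext_val t T" for T
    using ext_val_nonneg[OF fin(1)] assms(5) by (simp add: valid_decl_def)
  show ?thesis
  proof (cases "greedy_scan (sorted_bids rk n (b(i := bi))) Map.empty i")
    case None
    moreover have "ext_val t {} = 0"
      using assms(5) by (auto simp: valid_decl_def ext_val_def)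
    ultimately show ?thesis
      using t_nonneg by (simp add: greedy_alloc_def)
  next
    case (Some S)
    have "(i, S) \<in> bids n (b(i := bi))"
      using greedy_allocated_bid[OF assms(1,2) within_lie Some] .
    then have "S \<in> snd bi" and "0 < fst bi S"
      by (simp_all add: bids_def)
    have "fst bi S \<le> ext_val t S"
      using ext_val_ge[OF fin(2) \<open>S \<in> snd bi\<close>, of S] assms(7) Some by (simp add: greedy_alloc_def)
    then obtain S' where S': "S' \<in> snd t" "S' \<subseteq> S" "ext_val t S = fst t S'"
      using ext_val_attained[OF fin(1), of S] \<open>0 < fst bi S\<close> by (metis less_le_not_le)
    with \<open>fst bi S \<le> ext_val t S\<close> obtain T where "T \<in> snd t" and "fst t S' \<le> fst t T"
      and "greedy_scan (sorted_bids rk n (b(i := t))) Map.empty i = Some T"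
      using greedy_truthful_allocation_no_worse[OF assms(1-3) within(1,3,2) Some] by metis
    then show ?thesis
      using S' Some ext_val_ge[OF fin(1) \<open>T \<in> snd t\<close>, of T] by (simp add: greedy_alloc_def)
  qed
qed

end
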